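(* If $G$ is a cactus on $n$ vertices, then $\alpha_1(G)\geq \Big\lfloor\frac{n}{2}\Big\rfloor+r(n)$, where $r(n)=0$ if $n\equiv 0\pmod 4$ and $r(n)=1$ otherwise.
   Context: All graphs are finite and simple, with nonempty vertex set. For a graph $G$, a $k$-sparse set is a set of vertices inducing a subgraph of maximum degree at most $k$, and $\alpha_k(G)$ denotes the maximum size of a $k$-sparse set in $G$. A cactus is a graph (not necessarily connected) in which every block is a cycle, a single edge, or a single vertex. *)

theory Defs
  imports Main
begin

definition simple_graph :: "'a set \<Rightarrow> ('a \<Rightarrow> 'a \<Rightarrow> bool) \<Rightarrow> bool" where
  "simple_graph V E \<longleftrightarrow> finite V \<and> V \<noteq> {} \<and>
     (\<forall>u v. E u v \<longrightarrow> u \<in> V \<and> v \<in> V) \<and>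
     (\<forall>u v. E u v \<longrightarrow> E v u) \<and> (\<forall>v. \<not> E v v)"

definition nbrs_in :: "('a \<Rightarrow> 'a \<Rightarrow> bool) \<Rightarrow> 'a set \<Rightarrow> 'a \<Rightarrow> 'a set" where
  "nbrs_in E S v = {u \<in> S. E v u}"

definition joined_in :: "('a \<Rightarrow> 'a \<Rightarrow> bool) \<Rightarrow> 'a set \<Rightarrow> 'a \<Rightarrow> 'a \<Rightarrow> bool" where
  "joined_in E S x y \<longleftrightarrow> (\<lambda>a b. E a b \<and> a \<in> S \<and> b \<in> S)\<^sup>*\<^sup>* x y"

definition connected_in :: "('a \<Rightarrow> 'a \<Rightarrow> bool) \<Rightarrow> 'a set \<Rightarrow> bool" where
  "connected_in E S \<longleftrightarrow> S \<noteq> {} \<and> (\<forall>x\<in>S. \<forall>y\<in>S. joined_in E S x y)"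

definition no_cut_vertex_in :: "('a \<Rightarrow> 'a \<Rightarrow> bool) \<Rightarrow> 'a set \<Rightarrow> bool" where
  "no_cut_vertex_in E S \<longleftrightarrow>
     (\<forall>v\<in>S. \<forall>x\<in>S - {v}. \<forall>y\<in>S - {v}. joined_in E (S - {v}) x y)"

text \<open>A block of G: a maximal connected subgraph without a cut vertex
(such a maximal subgraph is necessarily induced, so it is given by its vertex set).\<close>
definition is_block :: "'a set \<Rightarrow> ('a \<Rightarrow> 'a \<Rightarrow> bool) \<Rightarrow> 'a set \<Rightarrow> bool" where
  "is_block V E B \<longleftrightarrow> B \<subseteq> V \<and> connected_in E B \<and> no_cut_vertex_in E B \<and>
     (\<forall>C. B \<subset> C \<and> C \<subseteq> V \<longrightarrow> \<not> (connected_in E C \<and> no_cut_vertex_in E C))"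

definition is_cycle_in :: "('a \<Rightarrow> 'a \<Rightarrow> bool) \<Rightarrow> 'a set \<Rightarrow> bool" where
  "is_cycle_in E S \<longleftrightarrow> card S \<ge> 3 \<and> connected_in E S \<and>
     (\<forall>v\<in>S. card (nbrs_in E S v) = 2)"

definition cactus :: "'a set \<Rightarrow> ('a \<Rightarrow> 'a \<Rightarrow> bool) \<Rightarrow> bool" where
  "cactus V E \<longleftrightarrow> simple_graph V E \<and>
     (\<forall>B. is_block V E B \<longrightarrow>
        is_cycle_in E B \<or> (\<exists>u v. B = {u, v} \<and> E u v) \<or> (\<exists>v. B = {v}))"

definition k_sparse :: "nat \<Rightarrow> 'a set \<Rightarrow> ('a \<Rightarrow> 'a \<Rightarrow> bool) \<Rightarrow> 'a set \<Rightarrow> bool" where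
  "k_sparse k V E S \<longleftrightarrow> S \<subseteq> V \<and> (\<forall>v\<in>S. card (nbrs_in E S v) \<le> k)"

definition alpha_k :: "nat \<Rightarrow> 'a set \<Rightarrow> ('a \<Rightarrow> 'a \<Rightarrow> bool) \<Rightarrow> nat" where
  "alpha_k k V E = Max (card ` {S. k_sparse k V E S})"

end

theory Submission
  imports Defs
begin

text \<open>
  Call a graph cactus-like if each of its biconnected induced subgraphs on at least three
  vertices has maximum degree at most 2. Cacti are cactus-like, and unlike the block
  condition this property passes to induced subgraphs.

  Let f(n) = n div 2 + r(n); f is subadditive and f(n) \<le> 2 for n \<le> 4. If X is a nonempty
  vertex set containing a 1-sparse set Y with f(|X|) \<le> |Y| and no neighbours outside X,
  then Y can be added to any 1-sparse set of G - X, so induction on n reduces the theorem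
  to finding such a piece in every nonempty cactus-like graph. An isolated vertex, two
  leaves with a common neighbour, or an edge ab with |N(a) \<union> N(b)| \<le> 4 gives one.

  In a graph with none of these, take a vertex c and a set D of at least two vertices whose
  neighbours all lie in D \<union> {c}, with |D| minimal. Minimality makes D connected and makes c
  together with the non-leaves of D a biconnected set Q. If the graph is cactus-like,
  vertices of Q have at most two neighbours in Q and, as no two leaves share a neighbour, at
  most one leaf neighbour. So a leaf of D with its neighbour, or any edge inside D if D has
  no leaves, is an edge ab with |N(a) \<union> N(b)| \<le> 4.
\<close>

lemma joined_in_if_closed_sets:
  assumes "x \<in> S"
    and "\<And>K. x \<in> K \<Longrightarrow> K \<subseteq> S \<Longrightarrow> (\<forall>k\<in>K. nbrs_in E S k \<subseteq> K) \<Longrightarrow> y \<in> K"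
  shows "joined_in E S x y"
proof -
  define K where "K = {t. joined_in E S x t}"
  have "K \<subseteq> S"
  proof
    fix t assume "t \<in> K"
    then have "(\<lambda>a b. E a b \<and> a \<in> S \<and> b \<in> S)\<^sup>*\<^sup>* x t"
      unfolding K_def joined_in_def by simp
    then show "t \<in> S"
      using \<open>x \<in> S\<close> by (induction rule: rtranclp_induct) auto
  qed
  moreover have "\<forall>k\<in>K. nbrs_in E S k \<subseteq> K"
    using \<open>K \<subseteq> S\<close> unfolding K_def joined_in_def nbrs_in_def
    by (auto intro: rtranclp.rtrancl_into_rtrancl)
  moreover have "x \<in> K"
    unfolding K_def joined_in_def by simp
  ultimately show ?thesis
    using assms(2) unfolding K_def by blast
qed

lemma closed_set_complement:
  assumes "symp E" and "\<forall>k\<in>K. nbrs_in E S k \<subseteq> K"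
  shows "\<forall>k\<in>S - K. nbrs_in E S k \<subseteq> S - K"
  using assms unfolding nbrs_in_def symp_def by blast

lemma nbrs_in_Un_eq:
  assumes "\<forall>a\<in>A. \<forall>b\<in>B. \<not> E a b" and "v \<in> A"
  shows "nbrs_in E (A \<union> B) v = nbrs_in E A v"
  using assms unfolding nbrs_in_def by blast

lemma k_sparse_Un:
  assumes "symp E" and "\<forall>a\<in>A. \<forall>b\<in>B. \<not> E a b"
    and "k_sparse k V E A" and "k_sparse k V E B"
  shows "k_sparse k V E (A \<union> B)"
proof -
  have "\<forall>b\<in>B. \<forall>a\<in>A. \<not> E b a"
    using assms(1,2) by (metis sympD)
  then show ?thesis
    using assms nbrs_in_Un_eq[of A B E] nbrs_in_Un_eq[of B A E]
    unfolding k_sparse_def by (metis Un_commute Un_iff le_supI)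
qed

lemma card_le_alpha_k:
  assumes "finite V" and "k_sparse k V E S"
  shows "card S \<le> alpha_k k V E"
proof -
  have "finite (card ` {S. k_sparse k V E S})"
    using \<open>finite V\<close> unfolding k_sparse_def by simp
  then show ?thesis
    using assms(2) unfolding alpha_k_def by (simp add: Max_ge)
qed

definition biconnected_in :: "('a \<Rightarrow> 'a \<Rightarrow> bool) \<Rightarrow> 'a set \<Rightarrow> bool" where
  "biconnected_in E S \<longleftrightarrow> connected_in E S \<and> no_cut_vertex_in E S"

definition cactus_like :: "('a \<Rightarrow> 'a \<Rightarrow> bool) \<Rightarrow> 'a set \<Rightarrow> bool" where
  "cactus_like E W \<longleftrightarrow>
     (\<forall>C\<subseteq>W. 3 \<le> card C \<longrightarrow> biconnected_in E C \<longrightarrow> (\<forall>v\<in>C. card (nbrs_in E C v) \<le> 2))"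

lemma cactus_like_mono: "cactus_like E W \<Longrightarrow> W' \<subseteq> W \<Longrightarrow> cactus_like E W'"
  unfolding cactus_like_def by blast

lemma biconnected_subset_block:
  assumes "finite V" and "C \<subseteq> V" and "biconnected_in E C"
  obtains B where "is_block V E B" and "C \<subseteq> B"
proof -
  define F where "F = {B. C \<subseteq> B \<and> B \<subseteq> V \<and> biconnected_in E B}"
  have "finite F"
    using \<open>finite V\<close> unfolding F_def by (simp add: finite_subset[of _ "Pow V"] subset_eq)
  moreover have "C \<in> F"
    using assms unfolding F_def by blast
  ultimately obtain B where "B \<in> F" and B_max: "\<forall>B'\<in>F. B \<subseteq> B' \<longrightarrow> B = B'"
    using finite_has_maximal by blast
  have "is_block V E B"
    using \<open>B \<in> F\<close> B_max unfolding is_block_def F_def biconnected_in_def by blast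
  then show thesis
    using that \<open>B \<in> F\<close> unfolding F_def by blast
qed

lemma cactus_imp_cactus_like:
  assumes "cactus V E"
  shows "cactus_like E V"
  unfolding cactus_like_def
proof (intro allI impI ballI)
  fix C v
  assume "C \<subseteq> V" "3 \<le> card C" "biconnected_in E C" "v \<in> C"
  have "finite V"
    using assms unfolding cactus_def simple_graph_def by blast
  then obtain B where B: "is_block V E B" "C \<subseteq> B"
    using biconnected_subset_block \<open>C \<subseteq> V\<close> \<open>biconnected_in E C\<close> by metis
  have "finite B"
    using B \<open>finite V\<close> unfolding is_block_def by (blast intro: finite_subset)
  then have "3 \<le> card B"
    using \<open>3 \<le> card C\<close> card_mono[OF _ \<open>C \<subseteq> B\<close>] by linarith
  moreover have "is_cycle_in E B \<or> (\<exists>x y. B = {x, y}) \<or> (\<exists>x. B = {x})"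
    using assms B(1) unfolding cactus_def by blast
  ultimately have "is_cycle_in E B"
    by (auto simp: card_insert_if split: if_splits)
  have "card (nbrs_in E C v) \<le> card (nbrs_in E B v)"
    using \<open>finite B\<close> \<open>C \<subseteq> B\<close> unfolding nbrs_in_def by (intro card_mono) auto
  also have "\<dots> = 2"
    using \<open>is_cycle_in E B\<close> \<open>v \<in> C\<close> \<open>C \<subseteq> B\<close> unfolding is_cycle_in_def by blast
  finally show "card (nbrs_in E C v) \<le> 2" .
qed

definition alpha1_bound :: "nat \<Rightarrow> nat" where
  "alpha1_bound n = n div 2 + (if n mod 4 = 0 then 0 else 1)"

lemma alpha1_bound_add: "alpha1_bound (a + b) \<le> alpha1_bound a + alpha1_bound b"
  unfolding alpha1_bound_def by presburger

lemma alpha1_bound_le_2: "n \<le> 4 \<Longrightarrow> alpha1_bound n \<le> 2"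
  unfolding alpha1_bound_def by presburger

definition removable_piece :: "('a \<Rightarrow> 'a \<Rightarrow> bool) \<Rightarrow> 'a set \<Rightarrow> 'a set \<Rightarrow> 'a set \<Rightarrow> bool" where
  "removable_piece E W X Y \<longleftrightarrow> X \<subseteq> W \<and> X \<noteq> {} \<and> k_sparse 1 X E Y \<and>
     (\<forall>y\<in>Y. nbrs_in E W y \<subseteq> X) \<and> alpha1_bound (card X) \<le> card Y"

lemma removable_piece_Un_sparse:
  assumes "symp E" "finite W" and piece: "removable_piece E W X Y" and S: "k_sparse 1 (W - X) E S"
  shows "k_sparse 1 W E (S \<union> Y)" and "card (S \<union> Y) = card S + card Y"
proof -
  have "X \<subseteq> W" and Y: "k_sparse 1 X E Y" "\<forall>y\<in>Y. nbrs_in E W y \<subseteq> X"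
    using piece unfolding removable_piece_def by auto
  have "\<forall>s\<in>S. \<forall>y\<in>Y. \<not> E s y"
  proof (intro ballI notI)
    fix s y assume "s \<in> S" "y \<in> Y" "E s y"
    then have "s \<in> nbrs_in E W y"
      using S sympD[OF \<open>symp E\<close>] unfolding k_sparse_def nbrs_in_def by blast
    then show False
      using Y(2) \<open>y \<in> Y\<close> \<open>s \<in> S\<close> S unfolding k_sparse_def by blast
  qed
  moreover have "k_sparse 1 W E S" "k_sparse 1 W E Y"
    using S Y(1) \<open>X \<subseteq> W\<close> unfolding k_sparse_def by auto
  ultimately show "k_sparse 1 W E (S \<union> Y)"
    using k_sparse_Un[OF \<open>symp E\<close>] by blast
  show "card (S \<union> Y) = card S + card Y"
  proof (rule card_Un_disjoint)
    have "S \<subseteq> W" "Y \<subseteq> W"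
      using S Y(1) \<open>X \<subseteq> W\<close> unfolding k_sparse_def by auto
    then show "finite S" "finite Y"
      using \<open>finite W\<close> by (auto intro: finite_subset)
    show "S \<inter> Y = {}"
      using S Y(1) unfolding k_sparse_def by auto
  qed
qed

lemma sparse_set_from_removable_pieces:
  assumes "symp E" and "finite W"
    and pieces: "\<And>W'. W' \<subseteq> W \<Longrightarrow> W' \<noteq> {} \<Longrightarrow> \<exists>X Y. removable_piece E W' X Y"
  shows "\<exists>S. k_sparse 1 W E S \<and> alpha1_bound (card W) \<le> card S"
  using \<open>finite W\<close> pieces
proof (induction W rule: finite_psubset_induct)
  case (psubset W)
  show ?case
  proof (cases "W = {}")
    case True
    then show ?thesis
      by (intro exI[of _ "{}"]) (simp add: k_sparse_def alpha1_bound_def)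
  next
    case False
    then obtain X Y where piece: "removable_piece E W X Y"
      using psubset.prems by blast
    then have "X \<subseteq> W" "X \<noteq> {}" "alpha1_bound (card X) \<le> card Y"
      unfolding removable_piece_def by auto
    have "\<exists>S. k_sparse 1 (W - X) E S \<and> alpha1_bound (card (W - X)) \<le> card S"
      using \<open>X \<subseteq> W\<close> \<open>X \<noteq> {}\<close> psubset.prems by (intro psubset.IH) auto
    then obtain S where S: "k_sparse 1 (W - X) E S" "alpha1_bound (card (W - X)) \<le> card S"
      by blast
    have "card W = card (W - X) + card X"
      using \<open>X \<subseteq> W\<close> psubset.hyps(1) by (metis card_Diff_subset card_mono finite_subset
          le_add_diff_inverse2)
    then have "alpha1_bound (card W) \<le> alpha1_bound (card (W - X)) + alpha1_bound (card X)"
      using alpha1_bound_add by simp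
    then have "alpha1_bound (card W) \<le> card S + card Y"
      using S(2) \<open>alpha1_bound (card X) \<le> card Y\<close> by linarith
    then show ?thesis
      using removable_piece_Un_sparse[OF \<open>symp E\<close> psubset.hyps(1) piece S(1)] by metis
  qed
qed

lemma isolated_vertex_piece:
  assumes "irreflp E" and "v \<in> W" and "nbrs_in E W v = {}"
  shows "removable_piece E W {v} {v}"
proof -
  have "nbrs_in E {v} v = {}"
    using \<open>irreflp E\<close> unfolding nbrs_in_def by (auto dest: irreflpD)
  then show ?thesis
    using assms unfolding removable_piece_def k_sparse_def alpha1_bound_def by auto
qed

lemma twin_leaves_piece:
  assumes "irreflp E" and "l\<^sub>1 \<in> W" "l\<^sub>2 \<in> W" "l\<^sub>1 \<noteq> l\<^sub>2"
    and "nbrs_in E W l\<^sub>1 = {u}" "nbrs_in E W l\<^sub>2 = {u}"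
  shows "removable_piece E W {u, l\<^sub>1, l\<^sub>2} {l\<^sub>1, l\<^sub>2}"
proof -
  have "u \<in> W" "E l\<^sub>1 u" "u \<noteq> l\<^sub>1" "u \<noteq> l\<^sub>2"
    using assms unfolding nbrs_in_def by (auto dest: irreflpD)
  moreover have "nbrs_in E {l\<^sub>1, l\<^sub>2} l = {}" if "l \<in> {l\<^sub>1, l\<^sub>2}" for l
    using assms that \<open>u \<noteq> l\<^sub>1\<close> \<open>u \<noteq> l\<^sub>2\<close> unfolding nbrs_in_def by (auto dest: irreflpD)
  moreover have "alpha1_bound (card {u, l\<^sub>1, l\<^sub>2}) \<le> 2"
    by (intro alpha1_bound_le_2) (simp add: card_insert_if)
  ultimately show ?thesis
    using assms unfolding removable_piece_def k_sparse_def by auto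
qed

lemma small_edge_piece:
  assumes "symp E" "irreflp E" and "a \<in> W" "b \<in> W" "E a b"
    and "card (nbrs_in E W a \<union> nbrs_in E W b) \<le> 4"
  shows "removable_piece E W (nbrs_in E W a \<union> nbrs_in E W b) {a, b}"
proof -
  have "nbrs_in E {a, b} a \<subseteq> {b}" "nbrs_in E {a, b} b \<subseteq> {a}"
    using assms unfolding nbrs_in_def by (auto dest: irreflpD)
  then have "\<forall>v\<in>{a, b}. card (nbrs_in E {a, b} v) \<le> 1"
    by (auto dest!: subset_singletonD)
  moreover have "card {a, b} = 2"
    using \<open>irreflp E\<close> \<open>E a b\<close> by (metis card_2_iff irreflpD)
  moreover have "{a, b} \<subseteq> nbrs_in E W a \<union> nbrs_in E W b"
    using assms unfolding nbrs_in_def by (auto dest: sympD)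
  ultimately show ?thesis
    using assms alpha1_bound_le_2 unfolding removable_piece_def k_sparse_def nbrs_in_def
    by auto
qed

locale piece_free_graph =
  fixes E :: "'a \<Rightarrow> 'a \<Rightarrow> bool" and W :: "'a set"
  assumes sym: "symp E" and irrefl: "irreflp E" and finite_W: "finite W"
    and no_isolated: "v \<in> W \<Longrightarrow> nbrs_in E W v \<noteq> {}"
    and no_twin_leaves:
      "\<lbrakk>l\<^sub>1 \<in> W; l\<^sub>2 \<in> W; nbrs_in E W l\<^sub>1 = {u}; nbrs_in E W l\<^sub>2 = {u}\<rbrakk> \<Longrightarrow> l\<^sub>1 = l\<^sub>2"
    and large_edge_nbhd:
      "\<lbrakk>a \<in> W; b \<in> W; E a b\<rbrakk> \<Longrightarrow> 4 < card (nbrs_in E W a \<union> nbrs_in E W b)"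
begin

abbreviation N :: "'a \<Rightarrow> 'a set" where
  "N \<equiv> nbrs_in E W"

lemma finite_N: "finite (N v)"
  using finite_W unfolding nbrs_in_def by simp

lemma mem_N_sym: "u \<in> N v \<Longrightarrow> v \<in> W \<Longrightarrow> v \<in> N u"
  using sym unfolding nbrs_in_def by (auto dest: sympD)

lemma not_mem_N_self: "v \<notin> N v"
  using irrefl unfolding nbrs_in_def by (auto dest: irreflpD)

lemma N_eq_singleton: "v \<in> W \<Longrightarrow> N v \<subseteq> {u, v} \<Longrightarrow> N v = {u}"
  using no_isolated not_mem_N_self by blast

definition hanging :: "'a \<Rightarrow> 'a set \<Rightarrow> bool" where
  "hanging c D \<longleftrightarrow> c \<in> W \<and> D \<subseteq> W - {c} \<and> 2 \<le> card D \<and> (\<forall>d\<in>D. N d \<subseteq> insert c D)"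

lemma hanging_exists:
  assumes "W \<noteq> {}"
  shows "\<exists>c D. hanging c D"
proof -
  obtain a where "a \<in> W"
    using assms by blast
  then obtain b where "b \<in> N a"
    using no_isolated by blast
  then have "4 < card (N a \<union> N b)"
    using \<open>a \<in> W\<close> large_edge_nbhd unfolding nbrs_in_def by blast
  also have "\<dots> \<le> card W"
    using finite_W unfolding nbrs_in_def by (intro card_mono) auto
  finally have "2 \<le> card (W - {a})"
    using finite_W \<open>a \<in> W\<close> by simp
  then have "hanging a (W - {a})"
    using \<open>a \<in> W\<close> unfolding hanging_def nbrs_in_def by auto
  then show ?thesis
    by blast
qed

end

locale min_hanging_set = piece_free_graph +
  fixes c :: 'a and D :: "'a set"
  assumes hanging_c_D: "hanging c D"
    and minimal: "hanging x K \<Longrightarrow> card D \<le> card K"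
begin

lemma c_in_W: "c \<in> W" and D_subset: "D \<subseteq> W - {c}" and two_le_card_D: "2 \<le> card D"
  and D_closed: "d \<in> D \<Longrightarrow> N d \<subseteq> insert c D"
  using hanging_c_D unfolding hanging_def by auto

lemma c_notin_D: "c \<notin> D"
  using D_subset by blast

lemma finite_D: "finite D"
  using D_subset finite_W by (auto intro: finite_subset)

lemma small_closed_subset:
  assumes "x \<in> W" "K \<subseteq> W - {x}" "card K < card D" "\<forall>k\<in>K. N k \<subseteq> insert x K"
  shows "card K \<le> 1"
  using minimal[of x K] assms unfolding hanging_def by fastforce

lemma closed_subset_complement:
  assumes "K \<subseteq> D" and K_closed: "\<forall>k\<in>K. N k \<subseteq> insert c K"
  shows "\<forall>k\<in>D - K. N k \<subseteq> insert c (D - K)"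
proof (intro ballI subsetI)
  fix k u assume "k \<in> D - K" "u \<in> N k"
  have "u \<notin> K"
    using K_closed mem_N_sym[OF \<open>u \<in> N k\<close>] \<open>k \<in> D - K\<close> D_subset by blast
  then show "u \<in> insert c (D - K)"
    using D_closed \<open>k \<in> D - K\<close> \<open>u \<in> N k\<close> by blast
qed

lemma closed_subset_eq:
  assumes "K \<subseteq> D" "K \<noteq> {}" and K_closed: "\<forall>k\<in>K. N k \<subseteq> insert c K"
  shows "K = D"
proof (rule ccontr)
  assume "K \<noteq> D"
  have rest_closed: "\<forall>k\<in>D - K. N k \<subseteq> insert c (D - K)"
    using closed_subset_complement[OF \<open>K \<subseteq> D\<close> K_closed] .
  have "card K < card D" "card (D - K) < card D"
    using assms \<open>K \<noteq> D\<close> finite_D by (auto intro!: psubset_card_mono)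
  moreover have "K \<subseteq> W - {c}" "D - K \<subseteq> W - {c}"
    using \<open>K \<subseteq> D\<close> D_subset by auto
  ultimately have "card K \<le> 1" "card (D - K) \<le> 1"
    using small_closed_subset[OF c_in_W] K_closed rest_closed by auto
  moreover have "finite K" "K \<noteq> {}" "finite (D - K)" "D - K \<noteq> {}"
    using assms \<open>K \<noteq> D\<close> finite_D by (auto intro: finite_subset)
  ultimately have "card K = 1" "card (D - K) = 1"
    by (simp_all add: le_Suc_eq)
  then obtain l\<^sub>1 l\<^sub>2 where "K = {l\<^sub>1}" "D - K = {l\<^sub>2}"
    by (meson card_1_singletonE)
  have "l\<^sub>1 \<in> W" "l\<^sub>2 \<in> W"
    using \<open>K = {l\<^sub>1}\<close> \<open>D - K = {l\<^sub>2}\<close> \<open>K \<subseteq> D\<close> D_subset by auto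
  moreover have "N l\<^sub>1 \<subseteq> insert c {l\<^sub>1}" "N l\<^sub>2 \<subseteq> insert c {l\<^sub>2}"
    using K_closed rest_closed \<open>K = {l\<^sub>1}\<close> \<open>D - K = {l\<^sub>2}\<close> by auto
  ultimately have "N l\<^sub>1 = {c}" "N l\<^sub>2 = {c}"
    using N_eq_singleton by blast+
  then have "l\<^sub>1 = l\<^sub>2"
    using \<open>l\<^sub>1 \<in> W\<close> \<open>l\<^sub>2 \<in> W\<close> by (intro no_twin_leaves)
  then show False
    using \<open>K = {l\<^sub>1}\<close> \<open>D - K = {l\<^sub>2}\<close> by blast
qed

lemma has_nbr_in_D:
  assumes "d \<in> D"
  obtains d' where "d' \<in> D" "E d d'"
proof -
  have "\<exists>d'\<in>D. E d d'"
  proof (rule ccontr)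
    assume "\<not> (\<exists>d'\<in>D. E d d')"
    then have "N d \<subseteq> insert c {d}"
      using D_closed[OF assms] unfolding nbrs_in_def by blast
    then have "{d} = D"
      using assms by (intro closed_subset_eq) auto
    then show False
      using two_le_card_D by auto
  qed
  then show thesis
    using that by blast
qed

lemma four_le_card_D: "4 \<le> card D"
proof -
  obtain d where "d \<in> D"
    using two_le_card_D by fastforce
  then obtain d' where "d' \<in> D" "E d d'"
    by (rule has_nbr_in_D)
  then have "4 < card (N d \<union> N d')"
    using \<open>d \<in> D\<close> D_subset by (intro large_edge_nbhd) auto
  also have "\<dots> \<le> card (insert c D)"
    using D_closed \<open>d \<in> D\<close> \<open>d' \<in> D\<close> finite_D by (intro card_mono) auto
  also have "\<dots> = card D + 1"
    using c_notin_D finite_D by simp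
  finally show ?thesis
    by simp
qed

lemma c_adjacent_to_D: "\<exists>d\<in>D. E c d"
proof (rule ccontr)
  assume "\<not> (\<exists>d\<in>D. E c d)"
  then have N_D: "N d \<subseteq> D" if "d \<in> D" for d
    using D_closed[OF that] that sym unfolding nbrs_in_def by (auto dest: sympD)
  obtain z where "z \<in> D"
    using two_le_card_D by fastforce
  have "card (D - {z}) \<le> 1"
  proof (rule small_closed_subset)
    show "z \<in> W" "D - {z} \<subseteq> W - {z}"
      using \<open>z \<in> D\<close> D_subset by auto
    show "card (D - {z}) < card D"
      using finite_D \<open>z \<in> D\<close> by (rule card_Diff1_less)
    show "\<forall>k\<in>D - {z}. N k \<subseteq> insert z (D - {z})"
      using N_D by blast
  qed
  then show False
    using four_le_card_D \<open>z \<in> D\<close> finite_D by simp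
qed

definition leaves :: "'a set" where
  "leaves = {v \<in> D. card (N v) = 1}"

lemma leaves_subset_D: "leaves \<subseteq> D"
  unfolding leaves_def by blast

lemma leaf_N_eq:
  assumes "l \<in> leaves" "u \<in> N l"
  shows "N l = {u}"
proof -
  have "card (N l) = 1"
    using assms unfolding leaves_def by blast
  then obtain w where "N l = {w}"
    by (rule card_1_singletonE)
  then show ?thesis
    using \<open>u \<in> N l\<close> by simp
qed

lemma leaf_nbr:
  assumes "l \<in> leaves"
  obtains u where "u \<in> D - leaves" "N l = {u}"
proof -
  have "l \<in> D" "card (N l) = 1"
    using assms unfolding leaves_def by auto
  then obtain u where "N l = {u}"
    by (meson card_1_singletonE)
  moreover obtain d' where "d' \<in> D" "E l d'"
    using has_nbr_in_D[OF \<open>l \<in> D\<close>] .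
  ultimately have "u \<in> D" "E l u" "u \<in> W"
    using D_subset unfolding nbrs_in_def by auto
  have "u \<notin> leaves"
  proof
    assume "u \<in> leaves"
    then have "N u = {l}"
      using leaf_N_eq mem_N_sym[of u l] \<open>N l = {u}\<close> \<open>l \<in> D\<close> D_subset by auto
    then have "card (N l \<union> N u) \<le> 4"
      using \<open>N l = {u}\<close> by (simp add: card_insert_if)
    then show False
      using large_edge_nbhd[of l u] \<open>E l u\<close> \<open>u \<in> W\<close> \<open>l \<in> D\<close> D_subset by auto
  qed
  then show thesis
    using that \<open>u \<in> D\<close> \<open>N l = {u}\<close> by blast
qed

lemma leaf_nbr_unique:
  assumes "u \<in> W" "l\<^sub>1 \<in> leaves" "l\<^sub>2 \<in> leaves" "E u l\<^sub>1" "E u l\<^sub>2"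
  shows "l\<^sub>1 = l\<^sub>2"
proof -
  have "N l = {u}" if "l \<in> leaves" "E u l" for l
    using that \<open>u \<in> W\<close> sym leaf_N_eq unfolding nbrs_in_def by (auto dest: sympD)
  then show ?thesis
    using assms D_subset unfolding leaves_def by (intro no_twin_leaves) auto
qed

lemma two_le_card_D_minus_leaves: "2 \<le> card (D - leaves)"
proof -
  have "inj_on (\<lambda>l. the_elem (N l)) leaves"
  proof (rule inj_onI)
    fix l\<^sub>1 l\<^sub>2 assume "l\<^sub>1 \<in> leaves" "l\<^sub>2 \<in> leaves" "the_elem (N l\<^sub>1) = the_elem (N l\<^sub>2)"
    moreover obtain u\<^sub>1 u\<^sub>2 where "N l\<^sub>1 = {u\<^sub>1}" "N l\<^sub>2 = {u\<^sub>2}"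
      using leaf_nbr \<open>l\<^sub>1 \<in> leaves\<close> \<open>l\<^sub>2 \<in> leaves\<close> by metis
    moreover have "l\<^sub>1 \<in> W" "l\<^sub>2 \<in> W"
      using \<open>l\<^sub>1 \<in> leaves\<close> \<open>l\<^sub>2 \<in> leaves\<close> D_subset unfolding leaves_def by auto
    ultimately show "l\<^sub>1 = l\<^sub>2"
      using no_twin_leaves by simp
  qed
  moreover have "(\<lambda>l. the_elem (N l)) ` leaves \<subseteq> D - leaves"
    using leaf_nbr by (metis image_subsetI the_elem_eq)
  ultimately have "card leaves \<le> card (D - leaves)"
    using finite_D by (intro card_inj_on_le) auto
  moreover have "card (D - leaves) = card D - card leaves" "card leaves \<le> card D"
    using leaves_subset_D finite_D by (simp_all add: card_Diff_subset card_mono finite_subset)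
  ultimately show ?thesis
    using four_le_card_D by linarith
qed

definition core :: "'a set" where
  "core = insert c (D - leaves)"

lemma core_subset_W: "core \<subseteq> W"
  unfolding core_def using c_in_W D_subset by blast

lemma N_subset_core_Un_leaves: "d \<in> D \<Longrightarrow> N d \<subseteq> core \<union> leaves"
  unfolding core_def using D_closed by blast

lemma c_adjacent_to_core: "\<exists>d\<in>D - leaves. E c d"
proof -
  obtain d where "d \<in> D" "E c d"
    using c_adjacent_to_D by blast
  moreover have "d \<notin> leaves"
  proof
    assume "d \<in> leaves"
    then obtain u where "u \<in> D - leaves" "N d = {u}"
      by (rule leaf_nbr)
    moreover have "c \<in> N d"
      using \<open>E c d\<close> c_in_W sym unfolding nbrs_in_def by (auto dest: sympD)
    ultimately show False
      using c_notin_D by (metis Diff_iff singletonD)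
  qed
  ultimately show ?thesis
    by blast
qed

definition with_leaves :: "'a set \<Rightarrow> 'a set" where
  "with_leaves K = K \<union> {l \<in> leaves. \<exists>k\<in>K. E k l}"

lemma with_leaves_closed:
  assumes "R \<subseteq> core" "K \<subseteq> core - R" "c \<notin> K"
    and K_closed: "\<forall>k\<in>K. nbrs_in E (core - R) k \<subseteq> K"
  shows "with_leaves K \<subseteq> D - R" and "\<forall>k\<in>with_leaves K. N k \<subseteq> with_leaves K \<union> R"
proof -
  have K_sub: "K \<subseteq> D - leaves"
    using assms(2,3) unfolding core_def by blast
  show "with_leaves K \<subseteq> D - R"
    using K_sub assms(1,2) leaves_subset_D c_notin_D unfolding with_leaves_def core_def by blast
  show "\<forall>k\<in>with_leaves K. N k \<subseteq> with_leaves K \<union> R"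
  proof (intro ballI subsetI)
    fix k u assume "k \<in> with_leaves K" "u \<in> N k"
    show "u \<in> with_leaves K \<union> R"
    proof (cases "k \<in> K")
      case True
      then have "u \<in> core \<union> leaves"
        using N_subset_core_Un_leaves K_sub \<open>u \<in> N k\<close> by blast
      moreover have "u \<in> K" if "u \<in> core - R"
        using K_closed True \<open>u \<in> N k\<close> that unfolding nbrs_in_def by blast
      ultimately show ?thesis
        using True \<open>u \<in> N k\<close> unfolding with_leaves_def nbrs_in_def by blast
    next
      case False
      then obtain k\<^sub>0 where "k \<in> leaves" "k\<^sub>0 \<in> K" "E k\<^sub>0 k"
        using \<open>k \<in> with_leaves K\<close> unfolding with_leaves_def by blast
      moreover have "k\<^sub>0 \<in> W"
        using \<open>k\<^sub>0 \<in> K\<close> K_sub D_subset by blast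
      ultimately have "N k = {k\<^sub>0}"
        using leaf_N_eq sym unfolding nbrs_in_def by (auto dest: sympD)
      then show ?thesis
        using \<open>u \<in> N k\<close> \<open>k\<^sub>0 \<in> K\<close> unfolding with_leaves_def by auto
    qed
  qed
qed

lemma no_closed_part_of_core_minus_vertex:
  assumes "v \<in> core" "v \<noteq> c" "K \<subseteq> core - {v}" "K \<noteq> {}" "c \<notin> K"
    and K_closed: "\<forall>k\<in>K. nbrs_in E (core - {v}) k \<subseteq> K"
  shows False
proof -
  have K'_sub: "with_leaves K \<subseteq> D - {v}"
    and K'_closed: "\<forall>k\<in>with_leaves K. N k \<subseteq> insert v (with_leaves K)"
    using with_leaves_closed[of "{v}" K] assms by auto
  have "v \<in> D"
    using assms(1,2) unfolding core_def by blast
  then have "card (with_leaves K) < card D"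
    using K'_sub finite_D by (meson Diff_subset_conv card_Diff1_less card_mono le_less_trans finite_Diff)
  \<comment> \<open>K with its leaves would hang from v and be smaller than D\<close>
  then have "card (with_leaves K) \<le> 1"
    using small_closed_subset[of v "with_leaves K"] K'_sub K'_closed \<open>v \<in> D\<close> D_subset by blast
  moreover obtain z where "z \<in> K"
    using \<open>K \<noteq> {}\<close> by blast
  moreover have "finite (with_leaves K)"
    using K'_sub finite_D by (auto intro: finite_subset)
  ultimately have "with_leaves K = {z}"
    unfolding with_leaves_def by (auto simp: card_le_Suc0_iff_eq)
  moreover have "z \<in> W"
    using \<open>z \<in> K\<close> assms(3) core_subset_W by blast
  moreover have "z \<in> D - leaves"
    using \<open>z \<in> K\<close> assms(3,5) unfolding core_def by blast
  ultimately have "N z = {v}"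
    using K'_closed by (intro N_eq_singleton) auto
  then show False
    using \<open>z \<in> D - leaves\<close> unfolding leaves_def by simp
qed

lemma closed_part_of_core_minus_c_eq:
  assumes "R \<subseteq> {c}" "K \<subseteq> core - R" "K \<noteq> {}" "c \<notin> K"
    and K_closed: "\<forall>k\<in>K. nbrs_in E (core - R) k \<subseteq> K"
  shows "K = core - R"
proof -
  have "R \<subseteq> core"
    using assms(1) unfolding core_def by blast
  then have K'_sub: "with_leaves K \<subseteq> D"
    and "\<forall>k\<in>with_leaves K. N k \<subseteq> with_leaves K \<union> R"
    using with_leaves_closed[of R K] assms by auto
  then have "\<forall>k\<in>with_leaves K. N k \<subseteq> insert c (with_leaves K)"
    using assms(1) by blast
  moreover have "with_leaves K \<noteq> {}"
    using \<open>K \<noteq> {}\<close> unfolding with_leaves_def by blast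
  ultimately have "with_leaves K = D"
    using K'_sub closed_subset_eq by blast
  then have K_eq: "K = D - leaves"
    using assms(2,4) unfolding with_leaves_def core_def by blast
  show ?thesis
  proof (cases "c \<in> R")
    case True
    then show ?thesis
      using K_eq assms(1) c_notin_D unfolding core_def by blast
  next
    case False
    then have "R = {}"
      using assms(1) by blast
    obtain d where "d \<in> D - leaves" "E c d"
      using c_adjacent_to_core by blast
    then have "c \<in> nbrs_in E (core - R) d"
      using \<open>R = {}\<close> sym unfolding core_def nbrs_in_def by (auto dest: sympD)
    then show ?thesis
      using K_closed K_eq \<open>d \<in> D - leaves\<close> \<open>c \<notin> K\<close> by blast
  qed
qed

lemma closed_part_of_core_eq:
  assumes "R \<subseteq> core" "card R \<le> 1" "K \<subseteq> core - R" "K \<noteq> {}" "c \<notin> K"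
    and "\<forall>k\<in>K. nbrs_in E (core - R) k \<subseteq> K"
  shows "K = core - R"
proof -
  have "finite R"
    using assms(1) core_subset_W finite_W by (auto intro: finite_subset)
  then consider "R \<subseteq> {c}" | v where "R = {v}" "v \<noteq> c"
    using \<open>card R \<le> 1\<close> by (metis card_le_Suc0_iff_eq insertI1 One_nat_def subsetI
        subset_singleton_iff singletonD)
  then show ?thesis
  proof cases
    case 1
    then show ?thesis
      using assms closed_part_of_core_minus_c_eq by blast
  next
    case 2
    then show ?thesis
      using assms no_closed_part_of_core_minus_vertex[of v K] by blast
  qed
qed

lemma joined_in_core_minus:
  assumes "R \<subseteq> core" "card R \<le> 1" "x \<in> core - R" "y \<in> core - R"
  shows "joined_in E (core - R) x y"
proof (rule joined_in_if_closed_sets[OF \<open>x \<in> core - R\<close>])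
  fix K assume "x \<in> K" "K \<subseteq> core - R" and K_closed: "\<forall>k\<in>K. nbrs_in E (core - R) k \<subseteq> K"
  show "y \<in> K"
  proof (cases "c \<in> K")
    case False
    then show ?thesis
      using closed_part_of_core_eq[OF assms(1,2)] \<open>x \<in> K\<close> \<open>K \<subseteq> core - R\<close> K_closed
        \<open>y \<in> core - R\<close> by blast
  next
    case True
    have "(core - R) - K = {}"
    proof (rule ccontr)
      assume "(core - R) - K \<noteq> {}"
      then have "(core - R) - K = core - R"
        using closed_part_of_core_eq[OF assms(1,2)] closed_set_complement[OF sym K_closed] True
        by blast
      then show False
        using \<open>x \<in> K\<close> \<open>x \<in> core - R\<close> by blast
    qed
    then show ?thesis
      using \<open>y \<in> core - R\<close> by blast
  qed
qed

lemma core_biconnected: "biconnected_in E core"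
  unfolding biconnected_in_def connected_in_def no_cut_vertex_in_def
  using joined_in_core_minus[of "{}"] joined_in_core_minus[of "{v}" for v]
  by (auto simp: core_def)

lemma card_N_minus_leaves_le_2:
  assumes "cactus_like E W" "u \<in> D - leaves"
  shows "card (N u - leaves) \<le> 2"
proof -
  have "3 \<le> card core"
    using two_le_card_D_minus_leaves finite_D c_notin_D unfolding core_def by simp
  then have "card (nbrs_in E core u) \<le> 2"
    using assms core_subset_W core_biconnected unfolding cactus_like_def core_def by blast
  moreover have "nbrs_in E core u = N u - leaves"
    using N_subset_core_Un_leaves[of u] assms(2) core_subset_W c_notin_D leaves_subset_D
    unfolding nbrs_in_def core_def by blast
  ultimately show ?thesis
    by simp
qed

lemma card_N_le_3:
  assumes "cactus_like E W" "u \<in> D - leaves"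
  shows "card (N u) \<le> 3"
proof -
  have "u \<in> W"
    using assms(2) D_subset by blast
  then have "card (N u \<inter> leaves) \<le> 1"
    using leaf_nbr_unique finite_N unfolding nbrs_in_def by (auto simp: card_le_Suc0_iff_eq)
  moreover have "card (N u) \<le> card (N u - leaves) + card (N u \<inter> leaves)"
    using card_Un_le[of "N u - leaves" "N u \<inter> leaves"] by (simp add: Un_Diff_Int)
  ultimately show ?thesis
    using card_N_minus_leaves_le_2[OF assms] by linarith
qed

lemma not_cactus_like: "\<not> cactus_like E W"
proof
  assume "cactus_like E W"
  show False
  proof (cases "leaves = {}")
    case True
    obtain d where "d \<in> D"
      using two_le_card_D by fastforce
    then obtain d' where "d' \<in> D" "E d d'"
      by (rule has_nbr_in_D)
    have "card (N d \<union> N d') \<le> card (N d) + card (N d')"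
      by (rule card_Un_le)
    also have "\<dots> \<le> 4"
      using card_N_minus_leaves_le_2[OF \<open>cactus_like E W\<close>] True \<open>d \<in> D\<close> \<open>d' \<in> D\<close>
      by (metis Diff_empty add_mono numeral_Bit0)
    finally show False
      using large_edge_nbhd[of d d'] \<open>E d d'\<close> \<open>d \<in> D\<close> \<open>d' \<in> D\<close> D_subset by auto
  next
    case False
    then obtain l where "l \<in> leaves"
      by blast
    then obtain u where "u \<in> D - leaves" "N l = {u}"
      by (rule leaf_nbr)
    have "l \<in> W" "u \<in> W" "E l u"
      using \<open>l \<in> leaves\<close> \<open>u \<in> D - leaves\<close> \<open>N l = {u}\<close> leaves_subset_D D_subset
      unfolding nbrs_in_def by auto
    have "card (insert u (N u)) \<le> 4"
      using card_N_le_3[OF \<open>cactus_like E W\<close> \<open>u \<in> D - leaves\<close>] finite_N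
      by (simp add: card_insert_if)
    then show False
      using large_edge_nbhd[OF \<open>l \<in> W\<close> \<open>u \<in> W\<close> \<open>E l u\<close>] \<open>N l = {u}\<close> by simp
  qed
qed

end

lemma (in piece_free_graph) nonempty_not_cactus_like:
  assumes "W \<noteq> {}"
  shows "\<not> cactus_like E W"
proof -
  obtain c D where "hanging c D"
    using hanging_exists[OF assms] by blast
  then obtain p where "hanging (fst p) (snd p)"
    and p_min: "\<And>q. hanging (fst q) (snd q) \<Longrightarrow> card (snd p) \<le> card (snd q)"
    using ex_has_least_nat[of "\<lambda>p. hanging (fst p) (snd p)" "(c, D)" "\<lambda>p. card (snd p)"] by auto
  then interpret min_hanging_set E W "fst p" "snd p"
    by unfold_locales (use p_min[of "(x, K)" for x K] in auto)
  show ?thesis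
    by (rule not_cactus_like)
qed

lemma removable_piece_exists:
  assumes "symp E" "irreflp E" "finite W" "W \<noteq> {}" "cactus_like E W"
  shows "\<exists>X Y. removable_piece E W X Y"
proof (rule ccontr)
  assume no_piece: "\<nexists>X Y. removable_piece E W X Y"
  have "piece_free_graph E W"
  proof
    show "nbrs_in E W v \<noteq> {}" if "v \<in> W" for v
      using isolated_vertex_piece[OF \<open>irreflp E\<close> that] no_piece by blast
    show "l\<^sub>1 = l\<^sub>2" if "l\<^sub>1 \<in> W" "l\<^sub>2 \<in> W" "nbrs_in E W l\<^sub>1 = {u}" "nbrs_in E W l\<^sub>2 = {u}"
      for l\<^sub>1 l\<^sub>2 u
      using twin_leaves_piece[OF \<open>irreflp E\<close> that(1,2) _ that(3,4)] no_piece by blast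
    show "4 < card (nbrs_in E W a \<union> nbrs_in E W b)" if "a \<in> W" "b \<in> W" "E a b" for a b
      using small_edge_piece[OF \<open>symp E\<close> \<open>irreflp E\<close> that] no_piece by force
  qed (use assms in auto)
  then show False
    using piece_free_graph.nonempty_not_cactus_like assms(4,5) by blast
qed

lemma cactus_like_sparse_set_exists:
  assumes "symp E" "irreflp E" "finite W" "cactus_like E W"
  shows "\<exists>S. k_sparse 1 W E S \<and> alpha1_bound (card W) \<le> card S"
  using assms cactus_like_mono
  by (intro sparse_set_from_removable_pieces removable_piece_exists) (auto intro: finite_subset)

theorem lemma4p2:
  fixes V :: "'a set" and E :: "'a \<Rightarrow> 'a \<Rightarrow> bool" and n :: nat
  assumes "cactus V E" and "card V = n"
  shows "alpha_k 1 V E \<ge> n div 2 + (if n mod 4 = 0 then 0 else 1)"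
proof -
  have "finite V" "symp E" "irreflp E"
    using \<open>cactus V E\<close> unfolding cactus_def simple_graph_def symp_def irreflp_def by auto
  moreover have "cactus_like E V"
    using \<open>cactus V E\<close> by (rule cactus_imp_cactus_like)
  ultimately obtain S where "k_sparse 1 V E S" "alpha1_bound (card V) \<le> card S"
    using cactus_like_sparse_set_exists by blast
  then show ?thesis
    using card_le_alpha_k[OF \<open>finite V\<close>] \<open>card V = n\<close> unfolding alpha1_bound_def by fastforce
qed

end
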